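(* Let $\mathbf{x}=[1,\mathbf{r}^\mathsf{T},\mathbf{t}^\mathsf{T}]^\mathsf{T}\in\mathbb{R}^{13}$ with $\mathbf{r}=\mathrm{vec}(\mathbf{R})\in\mathbb{R}^9$, $\mathbf{t}\in\mathbb{R}^3$. Let $\mathbf{Q}_1,\dots,\mathbf{Q}_{15}\in\mathcal{S}^{13}$ be symmetric matrices whose homogeneous quadratic forms $\mathbf{x}^\mathsf{T}\mathbf{Q}_j\mathbf{x}=0$ (with $x_1=1$) encode $\mathbf{R}\in\mathrm{SO}(3)$: unit-norm columns $\|\mathbf{r}_k\|^2-x_1^2=0$ ($k=1,2,3$), orthogonality $\mathbf{r}_1\cdot\mathbf{r}_2=\mathbf{r}_1\cdot\mathbf{r}_3=\mathbf{r}_2\cdot\mathbf{r}_3=0$, and the componentwise right-hand-rule equations $\mathbf{r}_1\times\mathbf{r}_2-x_1\mathbf{r}_3=0$, $\mathbf{r}_2\times\mathbf{r}_3-x_1\mathbf{r}_1=0$, $\mathbf{r}_3\times\mathbf{r}_1-x_1\mathbf{r}_2=0$, where $\mathbf{r}_k$ are the columns of $\mathbf{R}$. Let $\mathbf{A}_1,\dots,\mathbf{A}_{5N}\in\mathcal{S}^{13}$ be symmetric matrices with $\mathbf{x}^\mathsf{T}\mathbf{A}_i\mathbf{x}=2x_1\ell_i(\mathbf{r},\mathbf{t})$, where the $\ell_i$ are the $5N$ linear functions such that $\ell_i\le 0$ expresses, for each keypoint $k\in[N]$, the chirality constraint $-\hat{\mathbf{e}}_3^\mathsf{T}(\mathbf{R}\mathbf{b}_k+\mathbf{t})\le0$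 and the four backprojection constraints $\pm\hat{\mathbf{e}}_j^\mathsf{T}(\mathbf{y}_k\hat{\mathbf{e}}_3^\mathsf{T}-\mathbf{K})(\mathbf{R}\mathbf{b}_k+\mathbf{t})-r_k\hat{\mathbf{e}}_3^\mathsf{T}(\mathbf{R}\mathbf{b}_k+\mathbf{t})\le0$, $j=1,2$ (written linearly in $\mathbf{r}$ via $\mathbf{M}\mathbf{R}\mathbf{b}_k=(\mathbf{b}_k^\mathsf{T}\otimes\mathbf{M})\mathbf{r}$). Let $$\mathcal{P}=\{\mathbf{x}\in\mathbb{R}^{13}: x_1=1,\ \mathbf{x}^\mathsf{T}\mathbf{A}_i\mathbf{x}\le0\ (i\in[5N]),\ \mathbf{x}^\mathsf{T}\mathbf{Q}_j\mathbf{x}=0\ (j\in[15])\}.$$ Given a pose estimate $(\bar{\mathbf{R}},\bar{\mathbf{t}})$, let $\bar{\mathbf{x}}=[\mathrm{vec}(\bar{\mathbf{R}})^\mathsf{T},\bar{\mathbf{t}}^\mathsf{T}]^\mathsf{T}\in\mathbb{R}^{12}$ and for $\mathbf{H}\in\mathcal{S}^{12}$ define $$\mathbf{W}(\mathbf{H})=\begin{bmatrix}\bar{\mathbf{x}}^\mathsf{T}\mathbf{H}\bar{\mathbf{x}}-1 & -\bar{\mathbf{x}}^\mathsf{T}\mathbf{H}\\ -\mathbf{H}\bar{\mathbf{x}} & \mathbf{H}\end{bmatrix}.$$ Consider the convex program: maximize $\log\det(\mathbf{H})$ over $\mathbf{H}\in\mathcal{S}^{12}$, $\mathbf{H}\succeq0$,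 $\boldsymbol{\lambda}\in\mathbb{R}^{5N}$, $\boldsymbol{\mu}\in\mathbb{R}^{15}$, subject to $\mathbf{W}(\mathbf{H})\preceq\sum_{i=1}^{5N}\lambda_i\mathbf{A}_i+\sum_{j=1}^{15}\mu_j\mathbf{Q}_j$ and $\lambda_i\ge0$ for all $i$. Then its maximizer $\mathbf{H}^\star$ defines an outer bounding ellipsoid of $\mathcal{P}$ centered at $\bar{\mathbf{x}}$: every $[1,\mathbf{r}^\mathsf{T},\mathbf{t}^\mathsf{T}]^\mathsf{T}\in\mathcal{P}$ satisfies $$\begin{bmatrix}\mathbf{r}-\mathrm{vec}(\bar{\mathbf{R}})\\ \mathbf{t}-\bar{\mathbf{t}}\end{bmatrix}^\mathsf{T}\mathbf{H}^\star\begin{bmatrix}\mathbf{r}-\mathrm{vec}(\bar{\mathbf{R}})\\ \mathbf{t}-\bar{\mathbf{t}}\end{bmatrix}\le1.$$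
   Context: $\mathcal{S}^n$ is the set of symmetric $n\times n$ matrices; $\mathrm{vec}$ stacks columns; $\otimes$ is the Kronecker product; $\hat{\mathbf{e}}_j$ is the $j$-th standard basis vector of $\mathbb{R}^3$. $\mathbf{K}\in\mathbb{R}^{3\times3}$ are camera intrinsics, $\mathbf{b}_k\in\mathbb{R}^3$ model keypoints, $\mathbf{y}_k=[u_k,v_k,1]^\mathsf{T}$ pixel measurements and $r_k>0$ keypoint uncertainty radii. $\preceq$ denotes the Loewner (positive semidefinite) order. *)

theory Defs
  imports "HOL-Analysis.Analysis"
begin

text \<open>Vectors in R^n are functions nat => real (only indices < n matter);
 n x n matrices are functions nat => nat => real (only indices < n matter).
 All indices are 0-based.\<close>

definition qf :: "nat \<Rightarrow> (nat \<Rightarrow> nat \<Rightarrow> real) \<Rightarrow> (nat \<Rightarrow> real) \<Rightarrow> real" where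
  "qf n M x = (\<Sum>i<n. \<Sum>j<n. x i * M i j * x j)"

definition symm :: "nat \<Rightarrow> (nat \<Rightarrow> nat \<Rightarrow> real) \<Rightarrow> bool" where
  "symm n M \<longleftrightarrow> (\<forall>i<n. \<forall>j<n. M i j = M j i)"

definition psd :: "nat \<Rightarrow> (nat \<Rightarrow> nat \<Rightarrow> real) \<Rightarrow> bool" where
  "psd n M \<longleftrightarrow> (\<forall>v. 0 \<le> qf n M v)"

definition loewner_le :: "nat \<Rightarrow> (nat \<Rightarrow> nat \<Rightarrow> real) \<Rightarrow> (nat \<Rightarrow> nat \<Rightarrow> real) \<Rightarrow> bool" where
  "loewner_le n A B \<longleftrightarrow> psd n (\<lambda>i j. B i j - A i j)"

definition detn :: "nat \<Rightarrow> (nat \<Rightarrow> nat \<Rightarrow> real) \<Rightarrow> real" where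
  "detn n M = (\<Sum>p | p permutes {..<n}. of_int (sign p) * (\<Prod>i<n. M i (p i)))"

definition logdet :: "nat \<Rightarrow> (nat \<Rightarrow> nat \<Rightarrow> real) \<Rightarrow> ereal" where
  "logdet n M = (if 0 < detn n M then ereal (ln (detn n M)) else -\<infinity>)"

text \<open>Layout of x in R^13: x 0 = x_1 (homogenising coordinate),
 x (1 + 3*k + i) = R_{i,k} (r = vec R, column-major), x (10 + i) = t_i.\<close>
definition Rof :: "(nat \<Rightarrow> real) \<Rightarrow> nat \<Rightarrow> nat \<Rightarrow> real" where
  "Rof x i k = x (1 + 3 * k + i)"

definition tof :: "(nat \<Rightarrow> real) \<Rightarrow> nat \<Rightarrow> real" where
  "tof x i = x (10 + i)"

definition dot3 :: "(nat \<Rightarrow> real) \<Rightarrow> (nat \<Rightarrow> real) \<Rightarrow> real" where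
  "dot3 a b = (\<Sum>i<3. a i * b i)"

definition cross3 :: "(nat \<Rightarrow> real) \<Rightarrow> (nat \<Rightarrow> real) \<Rightarrow> nat \<Rightarrow> real" where
  "cross3 a b i = (if i = 0 then a 1 * b 2 - a 2 * b 1
                   else if i = 1 then a 2 * b 0 - a 0 * b 2
                   else a 0 * b 1 - a 1 * b 0)"

definition col :: "(nat \<Rightarrow> real) \<Rightarrow> nat \<Rightarrow> nat \<Rightarrow> real" where
  "col x k = (\<lambda>i. Rof x i k)"

definition qcon :: "nat \<Rightarrow> (nat \<Rightarrow> real) \<Rightarrow> real" where
  "qcon j x =
    (if j < 3 then dot3 (col x j) (col x j) - x 0 ^ 2
     else if j = 3 then dot3 (col x 0) (col x 1)
     else if j = 4 then dot3 (col x 0) (col x 2)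
     else if j = 5 then dot3 (col x 1) (col x 2)
     else if j < 9 then cross3 (col x 0) (col x 1) (j - 6) - x 0 * col x 2 (j - 6)
     else if j < 12 then cross3 (col x 1) (col x 2) (j - 9) - x 0 * col x 0 (j - 9)
     else cross3 (col x 2) (col x 0) (j - 12) - x 0 * col x 1 (j - 12))"

definition pk :: "(nat \<Rightarrow> real) \<Rightarrow> (nat \<Rightarrow> real) \<Rightarrow> nat \<Rightarrow> real" where
  "pk bk x i = (\<Sum>m<3. Rof x i m * bk m) + tof x i"

text \<open>The 5N linear functions l_i(r,t), i = 5k + c, for keypoint k < N:
 c = 0: chirality  -e3^T (R b_k + t);
 c = 1,2 (j = 1, sign +/-), c = 3,4 (j = 2, sign +/-):
   +/- e_j^T (y_k e3^T - K)(R b_k + t) - r_k e3^T (R b_k + t),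
 with y_k = [u_k, v_k, 1]^T.\<close>
definition lcon :: "(nat \<Rightarrow> nat \<Rightarrow> real) \<Rightarrow> (nat \<Rightarrow> nat \<Rightarrow> real) \<Rightarrow> (nat \<Rightarrow> real) \<Rightarrow>
    (nat \<Rightarrow> real) \<Rightarrow> (nat \<Rightarrow> real) \<Rightarrow> nat \<Rightarrow> (nat \<Rightarrow> real) \<Rightarrow> real" where
  "lcon K b u v rad i x =
    (let k = i div 5; c = i mod 5; p = pk (b k) x;
         y = (\<lambda>j. if j = 0 then u k else if j = 1 then v k else 1);
         j = (if c \<le> 2 then 0 else 1 :: nat);
         s = (if c = 1 \<or> c = 3 then 1 else -1 :: real);
         bp = y j * p 2 - (\<Sum>m<3. K j m * p m)
     in if c = 0 then - p 2 else s * bp - rad k * p 2)"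

definition xbar :: "(nat \<Rightarrow> nat \<Rightarrow> real) \<Rightarrow> (nat \<Rightarrow> real) \<Rightarrow> nat \<Rightarrow> real" where
  "xbar Rb tb i = (if i < 9 then Rb (i mod 3) (i div 3) else tb (i - 9))"

definition Wmat :: "(nat \<Rightarrow> real) \<Rightarrow> (nat \<Rightarrow> nat \<Rightarrow> real) \<Rightarrow> nat \<Rightarrow> nat \<Rightarrow> real" where
  "Wmat xb H i j =
    (if i = 0 \<and> j = 0 then qf 12 H xb - 1
     else if i = 0 then - (\<Sum>m<12. xb m * H m (j - 1))
     else if j = 0 then - (\<Sum>m<12. H (i - 1) m * xb m)
     else H (i - 1) (j - 1))"

definition feasible :: "nat \<Rightarrow> (nat \<Rightarrow> nat \<Rightarrow> nat \<Rightarrow> real) \<Rightarrow> (nat \<Rightarrow> nat \<Rightarrow> nat \<Rightarrow> real) \<Rightarrow>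
    (nat \<Rightarrow> real) \<Rightarrow> (nat \<Rightarrow> nat \<Rightarrow> real) \<Rightarrow> (nat \<Rightarrow> real) \<Rightarrow> (nat \<Rightarrow> real) \<Rightarrow> bool" where
  "feasible N A Q xb H lam mu \<longleftrightarrow>
     symm 12 H \<and> psd 12 H \<and> (\<forall>i<5 * N. 0 \<le> lam i) \<and>
     loewner_le 13 (Wmat xb H)
       (\<lambda>a c. (\<Sum>i<5 * N. lam i * A i a c) + (\<Sum>j<15. mu j * Q j a c))"

definition is_maximizer :: "nat \<Rightarrow> (nat \<Rightarrow> nat \<Rightarrow> nat \<Rightarrow> real) \<Rightarrow> (nat \<Rightarrow> nat \<Rightarrow> nat \<Rightarrow> real) \<Rightarrow>
    (nat \<Rightarrow> real) \<Rightarrow> (nat \<Rightarrow> nat \<Rightarrow> real) \<Rightarrow> bool" where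
  "is_maximizer N A Q xb Hs \<longleftrightarrow>
     (\<exists>lam mu. feasible N A Q xb Hs lam mu) \<and>
     (\<forall>H lam mu. feasible N A Q xb H lam mu \<longrightarrow> logdet 12 H \<le> logdet 12 Hs)"

definition inP :: "nat \<Rightarrow> (nat \<Rightarrow> nat \<Rightarrow> nat \<Rightarrow> real) \<Rightarrow> (nat \<Rightarrow> nat \<Rightarrow> nat \<Rightarrow> real) \<Rightarrow>
    (nat \<Rightarrow> real) \<Rightarrow> bool" where
  "inP N A Q x \<longleftrightarrow> x 0 = 1 \<and> (\<forall>i<5 * N. qf 13 (A i) x \<le> 0) \<and> (\<forall>j<15. qf 13 (Q j) x = 0)"

end

theory Submission
  imports Defs
begin

text \<open>Writing x = (s, y) with s = x_1, the bordered matrix satisfies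
  x^T W(H) x = (y - s xbar)^T H (y - s xbar) - s^2.
  For any feasible (H, lambda, mu) and x in P the Loewner constraint gives
  x^T W(H) x <= sum_i lambda_i x^T A_i x + sum_j mu_j x^T Q_j x <= 0, because
  lambda >= 0, x^T A_i x <= 0 and x^T Q_j x = 0; with s = 1 this is the ellipsoid
  inequality.\<close>

lemma qf_diff: "qf n (\<lambda>i j. B i j - C i j) x = qf n B x - qf n C x"
  unfolding qf_def by (simp add: algebra_simps sum_subtractf)

lemma qf_add: "qf n (\<lambda>i j. B i j + C i j) x = qf n B x + qf n C x"
  unfolding qf_def by (simp add: algebra_simps sum.distrib)

lemma qf_sum: "qf n (\<lambda>i j. \<Sum>k\<in>S. c k * B k i j) x = (\<Sum>k\<in>S. c k * qf n (B k) x)"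
  unfolding qf_def
  by (simp add: sum_distrib_left sum_distrib_right algebra_simps sum.swap[of _ S])

lemma loewner_le_qf_le: "loewner_le n A B \<Longrightarrow> qf n A x \<le> qf n B x"
  unfolding loewner_le_def psd_def by (metis qf_diff diff_ge_0_iff_ge)

lemma qf_multiplier_combination_nonpos:
  assumes "\<forall>i\<in>I. 0 \<le> lam i \<and> qf n (A i) x \<le> 0"
    and "\<forall>j\<in>J. qf n (Q j) x = 0"
  shows "qf n (\<lambda>a c. (\<Sum>i\<in>I. lam i * A i a c) + (\<Sum>j\<in>J. mu j * Q j a c)) x \<le> 0"
proof -
  have "(\<Sum>i\<in>I. lam i * qf n (A i) x) \<le> 0"
    using assms(1) by (intro sum_nonpos) (simp add: mult_nonneg_nonpos)
  moreover have "(\<Sum>j\<in>J. mu j * qf n (Q j) x) = 0"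
    using assms(2) by simp
  ultimately show ?thesis
    by (simp add: qf_add qf_sum)
qed

lemma qf_sub:
  "qf n H (\<lambda>i. y i - z i) = qf n H y - (\<Sum>i<n. \<Sum>j<n. y i * H i j * z j)
     - (\<Sum>i<n. \<Sum>j<n. z i * H i j * y j) + qf n H z"
  unfolding qf_def by (simp add: algebra_simps sum.distrib sum_subtractf)

lemma qf_scale: "qf n H (\<lambda>i. s * z i) = s\<^sup>2 * qf n H z"
  unfolding qf_def by (simp add: sum_distrib_left power2_eq_square algebra_simps)

lemma qf_Wmat:
  "qf 13 (Wmat xb H) x = qf 12 H (\<lambda>i. x (Suc i) - x 0 * xb i) - (x 0)\<^sup>2"
proof -
  let ?s = "x 0" and ?y = "\<lambda>i. x (Suc i)" and ?z = "\<lambda>i. x 0 * xb i"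
  have split13: "(\<Sum>i<13. f i) = f 0 + (\<Sum>i<12. f (Suc i))" for f :: "nat \<Rightarrow> real"
    using sum.lessThan_Suc_shift[of f 12] by simp
  have entries:
    "x 0 * Wmat xb H 0 0 * x 0 = qf 12 H ?z - ?s\<^sup>2"
    "x 0 * Wmat xb H 0 (Suc j) * x (Suc j) = - (\<Sum>i<12. ?z i * H i j * ?y j)"
    "x (Suc i) * Wmat xb H (Suc i) 0 * x 0 = - (\<Sum>j<12. ?y i * H i j * ?z j)"
    "x (Suc i) * Wmat xb H (Suc i) (Suc j) * x (Suc j) = ?y i * H i j * ?y j" for i j
    by (simp_all add: Wmat_def qf_scale sum_distrib_left sum_distrib_right algebra_simps
        power2_eq_square)
  have "qf 13 (Wmat xb H) x
      = qf 12 H ?y - (\<Sum>i<12. \<Sum>j<12. ?y i * H i j * ?z j)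
        - (\<Sum>j<12. \<Sum>i<12. ?z i * H i j * ?y j) + qf 12 H ?z - ?s\<^sup>2"
    unfolding qf_def[of 13] split13 entries
    by (simp add: qf_def sum.distrib sum_negf sum_subtractf)
  also have "\<dots> = qf 12 H (\<lambda>i. ?y i - ?z i) - ?s\<^sup>2"
    using sum.swap[of "\<lambda>i j. ?z i * H i j * ?y j" "{..<12}" "{..<12}"]
    unfolding qf_sub by simp
  finally show ?thesis .
qed

lemma feasible_ellipsoid_contains_inP:
  assumes "feasible N A Q xb H lam mu" and "inP N A Q x"
  shows "qf 12 H (\<lambda>i. x (i + 1) - xb i) \<le> 1"
proof -
  have "qf 13 (Wmat xb H) x
      \<le> qf 13 (\<lambda>a c. (\<Sum>i<5 * N. lam i * A i a c) + (\<Sum>j<15. mu j * Q j a c)) x"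
    using assms(1) unfolding feasible_def by (blast intro: loewner_le_qf_le)
  also have "\<dots> \<le> 0"
    using assms unfolding feasible_def inP_def
    by (intro qf_multiplier_combination_nonpos) auto
  finally show ?thesis
    using assms(2) by (simp add: qf_Wmat inP_def)
qed

theorem proposition3:
  fixes N :: nat
    and K :: "nat \<Rightarrow> nat \<Rightarrow> real"
    and b :: "nat \<Rightarrow> nat \<Rightarrow> real"
    and u v rad :: "nat \<Rightarrow> real"
    and A Q :: "nat \<Rightarrow> nat \<Rightarrow> nat \<Rightarrow> real"
    and Rb :: "nat \<Rightarrow> nat \<Rightarrow> real" and tb :: "nat \<Rightarrow> real"
    and Hs :: "nat \<Rightarrow> nat \<Rightarrow> real"
  assumes rad_pos: "\<forall>k<N. 0 < rad k"
    and Q_symm: "\<forall>j<15. symm 13 (Q j)"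
    and Q_def: "\<forall>j<15. \<forall>x. qf 13 (Q j) x = qcon j x"
    and A_symm: "\<forall>i<5 * N. symm 13 (A i)"
    and A_def: "\<forall>i<5 * N. \<forall>x. qf 13 (A i) x = 2 * x 0 * lcon K b u v rad i x"
    and Hs_max: "is_maximizer N A Q (xbar Rb tb) Hs"
  shows "\<forall>x. inP N A Q x \<longrightarrow> qf 12 Hs (\<lambda>i. x (i + 1) - xbar Rb tb i) \<le> 1"
proof -
  from Hs_max obtain lam mu where "feasible N A Q (xbar Rb tb) Hs lam mu"
    unfolding is_maximizer_def by blast
  then show ?thesis
    using feasible_ellipsoid_contains_inP by blast
qed

end
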